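(* Let $N=\{1,\dots,n\}$ and let $F:2^N\to\mathbb{R}$ be quasi-submodular. Let $X_1=\{i\in N: F(i\mid N-i)>0\}$ and $Y_1=\{i\in N: F(i\mid\emptyset)\ge 0\}$. Then every global maximizer of $F$ lies in $[X_1,Y_1]$, i.e., for every $X_*\in\arg\max_{X\subseteq N}F(X)$, $X_1\subseteq X_*\subseteq Y_1$.
   Context: For $A\subseteq N$ and $i\in N$, write $A+i=A\cup\{i\}$, $A-i=A\setminus\{i\}$, and $F(i\mid A)=F(A+i)-F(A)$. $F$ is quasi-submodular if for all $X,Y\subseteq N$ both hold: $F(X\cap Y)\ge F(X)\Rightarrow F(Y)\ge F(X\cup Y)$, and $F(X\cap Y)>F(X)\Rightarrow F(Y)>F(X\cup Y)$. $[A,B]=\{U: A\subseteq U\subseteq B\}$. *)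

theory Defs
  imports Complex_Main
begin

definition marg :: "('a set \<Rightarrow> real) \<Rightarrow> 'a \<Rightarrow> 'a set \<Rightarrow> real" where
  "marg F i A = F (insert i A) - F A"

definition quasi_submodular :: "'a set \<Rightarrow> ('a set \<Rightarrow> real) \<Rightarrow> bool" where
  "quasi_submodular N F \<longleftrightarrow>
     (\<forall>X Y. X \<subseteq> N \<longrightarrow> Y \<subseteq> N \<longrightarrow>
        (F (X \<inter> Y) \<ge> F X \<longrightarrow> F Y \<ge> F (X \<union> Y)) \<and>
        (F (X \<inter> Y) > F X \<longrightarrow> F Y > F (X \<union> Y)))"

end

theory Submission
  imports Defs
begin

text \<open>Both inclusions come from applying quasi-submodularity to a maximizer and a single
element. If a maximizer \<open>Xs\<close> missed some \<open>i\<close>, then \<open>Xs + i\<close> is no better than \<open>Xs = (Xs + i) \<inter> (N - i)\<close>,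
so \<open>F (N - i) \<ge> F N\<close>, i.e. \<open>F(i | N - i) \<le> 0\<close>. If \<open>i \<in> Xs\<close> had \<open>F {i} < F {}\<close>, the strict form
applied to \<open>{i}\<close> and \<open>Xs - i\<close> would give \<open>F (Xs - i) > F Xs\<close>, contradicting maximality.\<close>

lemma quasi_submodularD:
  assumes "quasi_submodular N F" "X \<subseteq> N" "Y \<subseteq> N" "F X \<le> F (X \<inter> Y)"
  shows "F (X \<union> Y) \<le> F Y"
  using assms unfolding quasi_submodular_def by blast

lemma quasi_submodular_strictD:
  assumes "quasi_submodular N F" "X \<subseteq> N" "Y \<subseteq> N" "F X < F (X \<inter> Y)"
  shows "F (X \<union> Y) < F Y"
  using assms unfolding quasi_submodular_def by blast

lemma quasi_submodular_maximizer_contains: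
  assumes qs: "quasi_submodular N F"
    and Xs_sub: "Xs \<subseteq> N" and Xs_max: "\<forall>X. X \<subseteq> N \<longrightarrow> F X \<le> F Xs"
    and iN: "i \<in> N" and pos: "marg F i (N - {i}) > 0"
  shows "i \<in> Xs"
proof (rule ccontr)
  assume "i \<notin> Xs"
  then have meet: "insert i Xs \<inter> (N - {i}) = Xs" and join: "insert i Xs \<union> (N - {i}) = N"
    using iN Xs_sub by auto
  have "F (insert i Xs) \<le> F Xs"
    using Xs_max iN Xs_sub by simp
  then have "F N \<le> F (N - {i})"
    using quasi_submodularD[OF qs, of "insert i Xs" "N - {i}"] meet join iN Xs_sub by simp
  moreover have "insert i (N - {i}) = N"
    using iN by blast
  ultimately show False
    using pos by (simp add: marg_def)
qed

lemma quasi_submodular_maximizer_subset: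
  assumes qs: "quasi_submodular N F"
    and Xs_sub: "Xs \<subseteq> N" and Xs_max: "\<forall>X. X \<subseteq> N \<longrightarrow> F X \<le> F Xs"
    and iXs: "i \<in> Xs"
  shows "marg F i {} \<ge> 0"
proof (rule ccontr)
  assume "\<not> marg F i {} \<ge> 0"
  then have "F {i} < F ({i} \<inter> (Xs - {i}))"
    by (simp add: marg_def)
  moreover have "{i} \<union> (Xs - {i}) = Xs"
    using iXs by blast
  ultimately have "F Xs < F (Xs - {i})"
    using quasi_submodular_strictD[OF qs, of "{i}" "Xs - {i}"] iXs Xs_sub by auto
  moreover have "F (Xs - {i}) \<le> F Xs"
    using Xs_max Xs_sub by blast
  ultimately show False
    by simp
qed

theorem lemma7:
  fixes n :: nat and F :: "nat set \<Rightarrow> real"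
  defines "N \<equiv> {1..n}"
  assumes qs: "quasi_submodular N F"
    and Xs_sub: "Xs \<subseteq> N"
    and Xs_max: "\<forall>X. X \<subseteq> N \<longrightarrow> F X \<le> F Xs"
  shows "{i \<in> N. marg F i (N - {i}) > 0} \<subseteq> Xs \<and> Xs \<subseteq> {i \<in> N. marg F i {} \<ge> 0}"
  using quasi_submodular_maximizer_contains[OF qs Xs_sub Xs_max]
    quasi_submodular_maximizer_subset[OF qs Xs_sub Xs_max] Xs_sub
  by blast

end
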